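(* In any probabilistic theory that supports universal self-steering, every irreducible finite-dimensional state space in the theory is homogeneous and weakly self-dual.
   Context: An abstract state space (system) is a pair $(A,u_A)$ where $A$ is a finite-dimensional real vector space with a closed, pointed, generating convex cone $A_+$, and $u_A$ is an interior point of the dual cone $A^*_+$; states are elements of $A_+$ with $u_A=1$. For systems $A,B$, $A\otimes_{\max}B$ (resp. $A\otimes_{\min}B$) is the space of bilinear forms on $A^*\times B^*$ ordered by the cone of forms nonnegative on $A^*_+\times B^*_+$ (resp. the cone generated by products $\alpha\otimes\beta$, $\alpha\in A_+,\beta\in B_+$), with order unit $u_A\otimes u_B$; a composite $AB$ is this vector space with any cone between these two. A probabilistic theory is a class of finite-dimensional abstract state spaces closed under formation of such composites. For a bipartite state $\omega$ on $AB$, $\hat\omega:A^*\to B$ is $\hat\omega(a)(b)=\omega(a,b)$ and $\omega^B=\hat\omega(u_A)$. An observable on $A$ is a finite family $a_i\in A^*_+$ with $\sum_ia_i=u_A$; an ensemble for $\beta\in B_+$ is a finite family $\beta_i\in B_+$ with $\sum_i\beta_i=\beta$; $\omega$ steers its $B$-marginal if every ensemble for $\omega^B$ equals $\{\hat\omega(x_i)\}$ for some observable $\{x_i\}$ on $A$. The theory supports universal self-steering if for every system $A$ in the theory and every state $\alpha$ of $A$ there is a state $\omega$ on a composite $AA$ of two copies of $A$ whose (second) marginal is $\alpha$ and which steers that marginal. A state space is irreducible if it is not an ordered direct sum of two nonzero ordered subspaces; homogeneous if its order-automorphism group acts transitively on the interior of its positive cone; weakly self-dual if there is an order-isomorphism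 (linear bijection preserving positivity in both directions) $A^*\to A$. *)

theory Defs
  imports "HOL-Analysis.Analysis"
begin

text \<open>
A system of dimension n lives in V n = vectors (nat => real) supported on {0..<n}
(i.e. R^n).  The dual space A* is identified with V n via the standard pairing.
\<close>

record system =
  sdim  :: nat
  scone :: "(nat \<Rightarrow> real) set"
  sunit :: "nat \<Rightarrow> real"

definition V :: "nat \<Rightarrow> (nat \<Rightarrow> real) set" where
  "V n = {x. \<forall>i\<ge>n. x i = 0}"

definition pair :: "nat \<Rightarrow> (nat \<Rightarrow> real) \<Rightarrow> (nat \<Rightarrow> real) \<Rightarrow> real" where
  "pair n f x = (\<Sum>i<n. f i * x i)"

definition sqdist :: "nat \<Rightarrow> (nat \<Rightarrow> real) \<Rightarrow> (nat \<Rightarrow> real) \<Rightarrow> real" where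
  "sqdist n x y = (\<Sum>i<n. (x i - y i)\<^sup>2)"

definition rel_int :: "nat \<Rightarrow> (nat \<Rightarrow> real) set \<Rightarrow> (nat \<Rightarrow> real) set" where
  "rel_int n S = {x \<in> S. \<exists>e>0. \<forall>y\<in>V n. sqdist n x y < e\<^sup>2 \<longrightarrow> y \<in> S}"

definition dual_cone :: "system \<Rightarrow> (nat \<Rightarrow> real) set" where
  "dual_cone A = {f \<in> V (sdim A). \<forall>a\<in>scone A. 0 \<le> pair (sdim A) f a}"

definition is_system :: "system \<Rightarrow> bool" where
  "is_system A \<longleftrightarrow>
     (let n = sdim A; K = scone A in
       K \<subseteq> V n \<and>
       (\<lambda>_. 0) \<in> K \<and>
       (\<forall>a\<in>K. \<forall>b\<in>K. (\<lambda>i. a i + b i) \<in> K) \<and>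
       (\<forall>c\<ge>0. \<forall>a\<in>K. (\<lambda>i. c * a i) \<in> K) \<and>
       closed K \<and>
       (\<forall>a\<in>K. (\<lambda>i. - a i) \<in> K \<longrightarrow> a = (\<lambda>_. 0)) \<and>
       (\<forall>x\<in>V n. \<exists>a\<in>K. \<exists>b\<in>K. x = (\<lambda>i. a i - b i)) \<and>
       sunit A \<in> rel_int n (dual_cone A))"

definition is_state :: "system \<Rightarrow> (nat \<Rightarrow> real) \<Rightarrow> bool" where
  "is_state A \<alpha> \<longleftrightarrow> \<alpha> \<in> scone A \<and> pair (sdim A) (sunit A) \<alpha> = 1"

text \<open>Tensor product of a \<in> V n and b \<in> V m, as element of V (n*m),
  coordinate (i,j) stored at index i*m+j.\<close>
definition tens :: "nat \<Rightarrow> nat \<Rightarrow> (nat \<Rightarrow> real) \<Rightarrow> (nat \<Rightarrow> real) \<Rightarrow> (nat \<Rightarrow> real)" where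
  "tens n m a b = (\<lambda>k. if k < n * m then a (k div m) * b (k mod m) else 0)"

text \<open>evaluation of the bilinear form \<omega> on A* x B*\<close>
definition bform :: "nat \<Rightarrow> nat \<Rightarrow> (nat \<Rightarrow> real) \<Rightarrow> (nat \<Rightarrow> real) \<Rightarrow> (nat \<Rightarrow> real) \<Rightarrow> real" where
  "bform n m \<omega> f g = (\<Sum>i<n. \<Sum>j<m. \<omega> (i * m + j) * f i * g j)"

definition max_cone :: "system \<Rightarrow> system \<Rightarrow> (nat \<Rightarrow> real) set" where
  "max_cone A B = {\<omega> \<in> V (sdim A * sdim B).
      \<forall>f\<in>dual_cone A. \<forall>g\<in>dual_cone B. 0 \<le> bform (sdim A) (sdim B) \<omega> f g}"

definition min_cone :: "system \<Rightarrow> system \<Rightarrow> (nat \<Rightarrow> real) set" where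
  "min_cone A B = {\<omega>. \<exists>(k::nat) p q. (\<forall>i<k. p i \<in> scone A \<and> q i \<in> scone B) \<and>
      \<omega> = (\<lambda>t. \<Sum>i<k. tens (sdim A) (sdim B) (p i) (q i) t)}"

definition is_composite :: "system \<Rightarrow> system \<Rightarrow> system \<Rightarrow> bool" where
  "is_composite A B C \<longleftrightarrow>
     sdim C = sdim A * sdim B \<and>
     min_cone A B \<subseteq> scone C \<and> scone C \<subseteq> max_cone A B \<and>
     sunit C = tens (sdim A) (sdim B) (sunit A) (sunit B)"

definition probabilistic_theory :: "system set \<Rightarrow> bool" where
  "probabilistic_theory T \<longleftrightarrow>
     (\<forall>A\<in>T. is_system A) \<and>
     (\<forall>A\<in>T. \<forall>B\<in>T. \<exists>C\<in>T. is_composite A B C)"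

definition hat :: "nat \<Rightarrow> nat \<Rightarrow> (nat \<Rightarrow> real) \<Rightarrow> (nat \<Rightarrow> real) \<Rightarrow> (nat \<Rightarrow> real)" where
  "hat n m \<omega> a = (\<lambda>j. if j < m then (\<Sum>i<n. \<omega> (i * m + j) * a i) else 0)"

definition marginalB :: "system \<Rightarrow> system \<Rightarrow> (nat \<Rightarrow> real) \<Rightarrow> (nat \<Rightarrow> real)" where
  "marginalB A B \<omega> = hat (sdim A) (sdim B) \<omega> (sunit A)"

definition is_observable :: "system \<Rightarrow> nat \<Rightarrow> (nat \<Rightarrow> nat \<Rightarrow> real) \<Rightarrow> bool" where
  "is_observable A k x \<longleftrightarrow>
     (\<forall>i<k. x i \<in> dual_cone A) \<and> (\<lambda>t. \<Sum>i<k. x i t) = sunit A"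

definition is_ensemble :: "system \<Rightarrow> (nat \<Rightarrow> real) \<Rightarrow> nat \<Rightarrow> (nat \<Rightarrow> nat \<Rightarrow> real) \<Rightarrow> bool" where
  "is_ensemble B \<beta> k b \<longleftrightarrow>
     (\<forall>i<k. b i \<in> scone B) \<and> (\<lambda>t. \<Sum>i<k. b i t) = \<beta>"

definition steers_marginal :: "system \<Rightarrow> system \<Rightarrow> (nat \<Rightarrow> real) \<Rightarrow> bool" where
  "steers_marginal A B \<omega> \<longleftrightarrow>
     (\<forall>k b. is_ensemble B (marginalB A B \<omega>) k b \<longrightarrow>
        (\<exists>x. is_observable A k x \<and> (\<forall>i<k. hat (sdim A) (sdim B) \<omega> (x i) = b i)))"

definition universal_self_steering :: "system set \<Rightarrow> bool" where
  "universal_self_steering T \<longleftrightarrow>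
     (\<forall>A\<in>T. \<forall>\<alpha>. is_state A \<alpha> \<longrightarrow>
        (\<exists>C\<in>T. \<exists>\<omega>. is_composite A A C \<and> is_state C \<omega> \<and>
            marginalB A A \<omega> = \<alpha> \<and> steers_marginal A A \<omega>))"

definition lin_subspace :: "(nat \<Rightarrow> real) set \<Rightarrow> bool" where
  "lin_subspace S \<longleftrightarrow> (\<lambda>_. 0) \<in> S \<and>
     (\<forall>x\<in>S. \<forall>y\<in>S. (\<lambda>i. x i + y i) \<in> S) \<and> (\<forall>c. \<forall>x\<in>S. (\<lambda>i. c * x i) \<in> S)"

definition irreducible :: "system \<Rightarrow> bool" where
  "irreducible A \<longleftrightarrow> \<not> (\<exists>S1 S2.
      lin_subspace S1 \<and> lin_subspace S2 \<and> S1 \<subseteq> V (sdim A) \<and> S2 \<subseteq> V (sdim A) \<and>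
      S1 \<noteq> {\<lambda>_. 0} \<and> S2 \<noteq> {\<lambda>_. 0} \<and> S1 \<inter> S2 = {\<lambda>_. 0} \<and>
      V (sdim A) = {(\<lambda>i. x i + y i) | x y. x \<in> S1 \<and> y \<in> S2} \<and>
      scone A = {(\<lambda>i. x i + y i) | x y. x \<in> scone A \<inter> S1 \<and> y \<in> scone A \<inter> S2})"

definition lin_on :: "nat \<Rightarrow> ((nat \<Rightarrow> real) \<Rightarrow> (nat \<Rightarrow> real)) \<Rightarrow> bool" where
  "lin_on n g \<longleftrightarrow> (\<forall>x\<in>V n. \<forall>y\<in>V n. g (\<lambda>i. x i + y i) = (\<lambda>i. g x i + g y i)) \<and>
     (\<forall>c. \<forall>x\<in>V n. g (\<lambda>i. c * x i) = (\<lambda>i. c * g x i))"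

definition order_automorphism :: "system \<Rightarrow> ((nat \<Rightarrow> real) \<Rightarrow> (nat \<Rightarrow> real)) \<Rightarrow> bool" where
  "order_automorphism A g \<longleftrightarrow> lin_on (sdim A) g \<and> bij_betw g (V (sdim A)) (V (sdim A)) \<and>
     g ` scone A = scone A"

definition homogeneous :: "system \<Rightarrow> bool" where
  "homogeneous A \<longleftrightarrow> (\<forall>a\<in>rel_int (sdim A) (scone A). \<forall>b\<in>rel_int (sdim A) (scone A).
      \<exists>g. order_automorphism A g \<and> g a = b)"

text \<open>order isomorphism A* -> A (A* identified with V n carrying the dual cone)\<close>
definition weakly_self_dual :: "system \<Rightarrow> bool" where
  "weakly_self_dual A \<longleftrightarrow> (\<exists>g. lin_on (sdim A) g \<and> bij_betw g (V (sdim A)) (V (sdim A)) \<and>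
      g ` dual_cone A = scone A)"

end

theory Submission
  imports Defs "Jordan_Normal_Form.Determinant"
begin

text \<open>
Self-steering a state \<alpha> from the interior of the cone yields a bipartite state \<omega> whose
conditioning map \<omega>-hat sends the dual cone into the cone (\<omega> is positive on products of effects,
and the cone is its own bidual) and onto it (every \<beta> \<ge> 0 is, up to a positive factor d, the first
member of the ensemble {d\<beta>, \<alpha> - d\<beta>} of \<alpha>, hence steered by an effect).  Being linear and onto a
generating cone, \<omega>-hat is surjective and therefore, in finite dimension, bijective: an order
isomorphism A* \<rightarrow> A taking the unit to \<alpha>.  This already gives weak self-duality, and composing
the isomorphism for \<beta> with the inverse of the one for \<alpha> (after normalising both states) gives an
order automorphism taking \<alpha> to \<beta>, i.e. homogeneity.
\<close>

lemma is_systemD: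
  assumes "is_system A"
  shows "scone A \<subseteq> V (sdim A)" "(\<lambda>_. 0) \<in> scone A"
    "\<And>a b. a \<in> scone A \<Longrightarrow> b \<in> scone A \<Longrightarrow> (\<lambda>i. a i + b i) \<in> scone A"
    "\<And>c a. c \<ge> 0 \<Longrightarrow> a \<in> scone A \<Longrightarrow> (\<lambda>i. c * a i) \<in> scone A"
    "closed (scone A)"
    "\<And>a. a \<in> scone A \<Longrightarrow> (\<lambda>i. - a i) \<in> scone A \<Longrightarrow> a = (\<lambda>_. 0)"
    "\<And>x. x \<in> V (sdim A) \<Longrightarrow> \<exists>a\<in>scone A. \<exists>b\<in>scone A. x = (\<lambda>i. a i - b i)"
    "sunit A \<in> rel_int (sdim A) (dual_cone A)"
  using assms unfolding is_system_def Let_def by blast+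

lemma V_add: "x \<in> V n \<Longrightarrow> y \<in> V n \<Longrightarrow> (\<lambda>i. x i + y i) \<in> V n"
  by (simp add: V_def)

lemma V_diff: "x \<in> V n \<Longrightarrow> y \<in> V n \<Longrightarrow> (\<lambda>i. x i - y i) \<in> V n"
  by (simp add: V_def)

lemma V_scale: "x \<in> V n \<Longrightarrow> (\<lambda>i. c * x i) \<in> V n"
  by (simp add: V_def)

lemma V_zero: "(\<lambda>_. 0) \<in> V n"
  by (simp add: V_def)

lemma V_eqI:
  assumes "x \<in> V n" "y \<in> V n" "\<And>i. i < n \<Longrightarrow> x i = y i"
  shows "x = y"
proof
  fix i
  show "x i = y i" using assms by (cases "i < n") (auto simp: V_def)
qed

lemma V_0: "V 0 = {\<lambda>_. 0}"
  by (auto simp: V_def)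

lemma pair_scale: "pair n f (\<lambda>i. c * a i) = c * pair n f a"
  by (simp add: pair_def sum_distrib_left algebra_simps)

lemma pair_diff: "pair n f (\<lambda>i. a i - b i) = pair n f a - pair n f b"
  by (simp add: pair_def sum_subtractf algebra_simps)

lemma pair_scale_left: "pair n (\<lambda>i. c * f i) a = c * pair n f a"
  by (simp add: pair_def sum_distrib_left algebra_simps)

lemma pair_diff_left: "pair n (\<lambda>i. f i - g i) a = pair n f a - pair n g a"
  by (simp add: pair_def sum_subtractf algebra_simps)

lemma pair_self_pos:
  assumes "x \<in> V n" "x \<noteq> (\<lambda>_. 0)"
  shows "pair n x x > 0"
proof -
  obtain j where j: "j < n" "x j \<noteq> 0" using V_eqI[OF assms(1) V_zero] assms(2) by blast
  have "x j * x j \<le> (\<Sum>i<n. x i * x i)" using j by (intro member_le_sum) auto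
  moreover have "x j * x j > 0" using j by (auto simp: zero_less_mult_iff)
  ultimately show ?thesis unfolding pair_def by linarith
qed

lemma sqdist_le_coord: "i < n \<Longrightarrow> (x i - y i)\<^sup>2 \<le> sqdist n x y"
  unfolding sqdist_def by (intro member_le_sum) auto

lemma continuous_on_sqdist: "continuous_on S (\<lambda>k. sqdist n y k)"
proof -
  have "continuous_on S (\<lambda>x::nat\<Rightarrow>real. x i)" for i
    by (rule continuous_on_subset[OF continuous_on_product_coordinates]) simp
  then show ?thesis unfolding sqdist_def by (intro continuous_intros)
qed

lemma sqdist_add_scaled:
  "sqdist n y (\<lambda>i. p i + t * k i)
     = sqdist n y p + 2 * t * pair n (\<lambda>i. p i - y i) k + t\<^sup>2 * pair n k k"
proof -
  have "\<And>i. (y i - (p i + t*k i))\<^sup>2 = (y i - p i)\<^sup>2 + 2*t*((p i - y i)*k i) + t\<^sup>2*(k i*k i)"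
    by (simp add: power2_eq_square algebra_simps)
  then show ?thesis by (simp add: sqdist_def pair_def sum.distrib sum_distrib_left)
qed

lemma hat_add: "hat n m \<omega> (\<lambda>i. a i + b i) = (\<lambda>j. hat n m \<omega> a j + hat n m \<omega> b j)"
  by (auto simp: hat_def sum.distrib algebra_simps)

lemma hat_diff: "hat n m \<omega> (\<lambda>i. a i - b i) = (\<lambda>j. hat n m \<omega> a j - hat n m \<omega> b j)"
  by (auto simp: hat_def sum_subtractf algebra_simps)

lemma hat_scale: "hat n m \<omega> (\<lambda>i. c * a i) = (\<lambda>j. c * hat n m \<omega> a j)"
  by (auto simp: hat_def sum_distrib_left algebra_simps)

lemma hat_in_V: "hat n m \<omega> a \<in> V m"
  by (auto simp: hat_def V_def)

lemma lin_on_hat: "lin_on n (hat n m \<omega>)"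
  unfolding lin_on_def by (simp add: hat_add hat_scale)

lemma bform_eq_pair_hat: "bform n m \<omega> f g = pair m g (hat n m \<omega> f)"
  unfolding bform_def pair_def hat_def
  by (simp add: sum_distrib_left algebra_simps sum.swap[of _ "{..<n}"])

lemma dual_cone_subset_V: "dual_cone A \<subseteq> V (sdim A)"
  by (auto simp: dual_cone_def)

lemma dual_cone_scale: "f \<in> dual_cone A \<Longrightarrow> c \<ge> 0 \<Longrightarrow> (\<lambda>i. c * f i) \<in> dual_cone A"
  by (auto simp: dual_cone_def pair_scale_left V_scale)

lemma cone_sum:
  assumes "is_system A" "finite I" "\<And>i. i \<in> I \<Longrightarrow> f i \<in> scone A"
  shows "(\<lambda>t. \<Sum>i\<in>I. f i t) \<in> scone A"
  using assms(2,3)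
proof (induction I rule: finite_induct)
  case empty
  then show ?case using is_systemD(2)[OF assms(1)] by simp
next
  case (insert x F)
  then have "(\<lambda>t. f x t + (\<Sum>i\<in>F. f i t)) \<in> scone A"
    using is_systemD(3)[OF assms(1)] by auto
  then show ?case using insert by simp
qed

lemma cone_scale_image:
  assumes "is_system A" "c > 0"
  shows "(\<lambda>x i. c * x i) ` scone A = scone A"
proof
  show "(\<lambda>x i. c * x i) ` scone A \<subseteq> scone A" using is_systemD(4)[OF assms(1)] assms(2) by auto
  show "scone A \<subseteq> (\<lambda>x i. c * x i) ` scone A"
  proof
    fix y assume y: "y \<in> scone A"
    have "(\<lambda>i. (1/c) * y i) \<in> scone A" using is_systemD(4)[OF assms(1), of "1/c" y] assms(2) y by simp
    moreover have "y = (\<lambda>x i. c * x i) (\<lambda>i. (1/c) * y i)" using assms(2) by (intro ext) simp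
    ultimately show "y \<in> (\<lambda>x i. c * x i) ` scone A" by (intro image_eqI)
  qed
qed

section \<open>The cone is its own bidual\<close>

lemma quadratic_negative_near_zero:
  fixes c N :: real
  assumes "c < 0" "N \<ge> 0"
  shows "\<exists>t. 0 < t \<and> t < 1 \<and> 2 * t * c + t\<^sup>2 * N < 0"
proof -
  define t where "t = min (1/2) (- c / (N + 1))"
  have "- c / (N + 1) > 0" using assms by (intro divide_pos_pos) auto
  then have t0: "0 < t" by (simp add: t_def)
  have "t * (N + 1) \<le> (- c / (N + 1)) * (N + 1)"
    using assms by (intro mult_right_mono) (auto simp: t_def)
  then have "t * (N + 1) \<le> - c" using assms by simp
  then have "t * N < - c" using t0 by (simp add: algebra_simps)
  then have "t * (t * N) < t * (- c)" using t0 by (intro mult_strict_left_mono)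
  moreover have "2*t*c + t\<^sup>2*N = t*(t*N) - 2*(t*(-c))" by (simp add: power2_eq_square algebra_simps)
  moreover have "t * (- c) > 0" using t0 assms by (intro mult_pos_pos) auto
  ultimately show ?thesis using t0 by (intro exI[of _ t]) (auto simp: t_def)
qed

lemma cone_has_nearest_point:
  assumes sys: "is_system A"
  shows "\<exists>p\<in>scone A. \<forall>k\<in>scone A. sqdist (sdim A) y p \<le> sqdist (sdim A) y k"
proof -
  define n where "n = sdim A"
  define K where "K = scone A"
  note F = is_systemD[OF sys, folded n_def K_def]
  define r where "r = sqdist n y (\<lambda>_. 0)"
  define S where "S = K \<inter> {k. sqdist n y k \<le> r}"
  define P where "P = PiE UNIV (\<lambda>i. {-(\<bar>y i\<bar> + sqrt r) .. \<bar>y i\<bar> + sqrt r})"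
  have r0: "r \<ge> 0" unfolding r_def sqdist_def by (intro sum_nonneg) auto
  have "compactin (product_topology (\<lambda>i. euclidean) UNIV) P"
    unfolding P_def compactin_PiE by auto
  then have "compact P" by (simp add: euclidean_product_topology)
  moreover have "S \<subseteq> P"
  proof
    fix k assume k: "k \<in> S"
    have "\<bar>k i\<bar> \<le> \<bar>y i\<bar> + sqrt r" for i
    proof (cases "i < n")
      case True
      have "(y i - k i)\<^sup>2 \<le> r" using sqdist_le_coord[OF True, of y k] k by (auto simp: S_def)
      then have "\<bar>y i - k i\<bar> \<le> sqrt r" by (metis real_sqrt_abs real_sqrt_le_mono)
      then show ?thesis by linarith
    next
      case False
      then show ?thesis using k F(1) r0 by (auto simp: S_def V_def)
    qed
    then have "k i \<in> {-(\<bar>y i\<bar> + sqrt r) .. \<bar>y i\<bar> + sqrt r}" for i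
      unfolding atLeastAtMost_iff abs_le_iff by (metis minus_le_iff)
    then show "k \<in> P" unfolding P_def by (simp add: PiE_iff)
  qed
  moreover have "closed S" unfolding S_def
    by (intro closed_Int F(5) closed_Collect_le continuous_on_sqdist continuous_on_const)
  ultimately have "compact S" using compact_Int_closed[of P S] by (simp add: Int_absorb1)
  moreover have "(\<lambda>_. 0) \<in> S" using F(2) by (simp add: S_def r_def)
  ultimately obtain p where p: "p \<in> S" "\<forall>k\<in>S. sqdist n y p \<le> sqdist n y k"
    using continuous_attains_inf[OF _ _ continuous_on_sqdist] by blast
  have "sqdist n y p \<le> sqdist n y k" if "k \<in> K" for k
    using p that by (cases "k \<in> S") (auto simp: S_def)
  then show ?thesis using p(1) unfolding S_def n_def K_def by blast
qed

lemma nearest_point_in_cone_separates: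
  assumes sys: "is_system A" and p: "p \<in> scone A"
    and min: "\<forall>k\<in>scone A. sqdist (sdim A) y p \<le> sqdist (sdim A) y k"
  shows "\<forall>k\<in>scone A. 0 \<le> pair (sdim A) (\<lambda>i. p i - y i) k"
    and "pair (sdim A) (\<lambda>i. p i - y i) p \<le> 0"
proof -
  define n where "n = sdim A"
  define g where "g = (\<lambda>i. p i - y i)"
  note F = is_systemD[OF sys, folded n_def]
  have kk: "pair n k k \<ge> 0" for k unfolding pair_def by (intro sum_nonneg) auto
  show "\<forall>k\<in>scone A. 0 \<le> pair (sdim A) (\<lambda>i. p i - y i) k"
  proof (intro ballI, rule ccontr)
    fix k assume k: "k \<in> scone A" and "\<not> 0 \<le> pair (sdim A) (\<lambda>i. p i - y i) k"
    then obtain t where t: "0 < t" "2 * t * pair n g k + t\<^sup>2 * pair n k k < 0"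
      using quadratic_negative_near_zero[of "pair n g k" "pair n k k"] kk
      by (auto simp: g_def n_def)
    have "(\<lambda>i. p i + t * k i) \<in> scone A" using F(3,4) t(1) k p by simp
    then have "sqdist n y p \<le> sqdist n y (\<lambda>i. p i + t * k i)" using min n_def by blast
    then show False using t sqdist_add_scaled[of n y p t k] unfolding g_def by simp
  qed
  show "pair (sdim A) (\<lambda>i. p i - y i) p \<le> 0"
  proof (rule ccontr)
    assume "\<not> ?thesis"
    then obtain t where t: "0 < t" "t < 1" "2 * (- t) * pair n g p + (- t)\<^sup>2 * pair n p p < 0"
      using quadratic_negative_near_zero[of "- pair n g p" "pair n p p"] kk
      by (auto simp: g_def n_def)
    have "(\<lambda>i. (1 - t) * p i) \<in> scone A" using F(4) t p by simp
    moreover have "(\<lambda>i. (1 - t) * p i) = (\<lambda>i. p i + (- t) * p i)" by (auto simp: algebra_simps)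
    ultimately have "sqdist n y p \<le> sqdist n y (\<lambda>i. p i + (- t) * p i)" using min n_def by auto
    then show False using t sqdist_add_scaled[of n y p "- t" p] unfolding g_def by simp
  qed
qed

lemma mem_cone_if_dual_nonneg:
  assumes sys: "is_system A" and y: "y \<in> V (sdim A)"
    and nonneg: "\<forall>g\<in>dual_cone A. 0 \<le> pair (sdim A) g y"
  shows "y \<in> scone A"
proof (rule ccontr)
  assume y_notin: "y \<notin> scone A"
  define n where "n = sdim A"
  obtain p where p: "p \<in> scone A" "\<forall>k\<in>scone A. sqdist n y p \<le> sqdist n y k"
    using cone_has_nearest_point[OF sys] n_def by blast
  define g where "g = (\<lambda>i. p i - y i)"
  note sep = nearest_point_in_cone_separates[OF sys p[unfolded n_def], folded n_def g_def]
  have gV: "g \<in> V n" unfolding g_def using p(1) is_systemD(1)[OF sys] y n_def by (intro V_diff) auto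
  then have "g \<in> dual_cone A" using sep(1) by (simp add: dual_cone_def n_def)
  moreover have "p \<noteq> y" using p(1) y_notin by blast
  then have "g \<noteq> (\<lambda>_. 0)" by (auto simp: g_def fun_eq_iff)
  then have "pair n g g > 0" using gV by (rule pair_self_pos[rotated])
  then have "pair n g y < 0"
    using sep(2) pair_diff[of n g p y] unfolding g_def[symmetric] by simp
  ultimately show False using nonneg n_def by force
qed

section \<open>Interior points of the cone\<close>

lemma rel_int_subset: "rel_int n S \<subseteq> S"
  by (auto simp: rel_int_def)

lemma rel_int_perturb:
  assumes x: "x \<in> rel_int n S" and SV: "S \<subseteq> V n" and z: "z \<in> V n"
  shows "\<exists>d>0. (\<lambda>i. x i - d * z i) \<in> S"
proof -
  obtain e where e: "e > 0" "\<forall>y\<in>V n. sqdist n x y < e\<^sup>2 \<longrightarrow> y \<in> S"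
    using x unfolding rel_int_def by blast
  define N where "N = (\<Sum>i<n. (z i)\<^sup>2)"
  have N0: "N \<ge> 0" unfolding N_def by (intro sum_nonneg) auto
  define d where "d = e / (N + 1)"
  have d0: "d > 0" using e N0 by (simp add: d_def)
  have "N < (N + 1)\<^sup>2" using N0 by (simp add: power2_eq_square algebra_simps) (smt (verit) mult_nonneg_nonneg)
  then have "d\<^sup>2 * N < d\<^sup>2 * (N + 1)\<^sup>2" using d0 by (intro mult_strict_left_mono) auto
  also have "\<dots> = e\<^sup>2" using N0 by (simp add: d_def power_divide)
  finally have "sqdist n x (\<lambda>i. x i - d * z i) < e\<^sup>2"
    by (simp add: sqdist_def N_def sum_distrib_left power_mult_distrib)
  moreover have "(\<lambda>i. x i - d * z i) \<in> V n"
    using x SV z rel_int_subset by (intro V_diff V_scale) auto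
  ultimately show ?thesis using e(2) d0 by blast
qed

lemma rel_int_cone_scale:
  assumes sys: "is_system A" and t: "t > 0" and a: "a \<in> rel_int (sdim A) (scone A)"
  shows "(\<lambda>i. t * a i) \<in> rel_int (sdim A) (scone A)"
proof -
  define n where "n = sdim A"
  note F = is_systemD[OF sys, folded n_def]
  obtain e where e: "e > 0" "\<forall>y\<in>V n. sqdist n a y < e\<^sup>2 \<longrightarrow> y \<in> scone A"
    using a unfolding rel_int_def n_def by blast
  have "y \<in> scone A" if y: "y \<in> V n" "sqdist n (\<lambda>i. t * a i) y < (t * e)\<^sup>2" for y
  proof -
    have "\<And>i. (t * a i - y i)\<^sup>2 = t\<^sup>2 * (a i - y i / t)\<^sup>2" using t
      by (simp add: power2_eq_square field_simps)
    then have "sqdist n (\<lambda>i. t * a i) y = t\<^sup>2 * sqdist n a (\<lambda>i. y i / t)"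
      by (simp add: sqdist_def sum_distrib_left)
    then have "sqdist n a (\<lambda>i. y i / t) < e\<^sup>2" using y(2) t by (simp add: power_mult_distrib)
    moreover have "(\<lambda>i. y i / t) \<in> V n" using y(1) by (auto simp: V_def)
    ultimately have "(\<lambda>i. y i / t) \<in> scone A" using e(2) by blast
    then have "(\<lambda>i. t * (y i / t)) \<in> scone A" using F(4) t by (simp only: less_imp_le)
    then show "y \<in> scone A" using t by simp
  qed
  moreover have "(\<lambda>i. t * a i) \<in> scone A" using F(4) t a rel_int_subset by (meson less_imp_le subsetD)
  moreover have "t * e > 0" using t e by simp
  ultimately show ?thesis unfolding rel_int_def n_def by blast
qed

lemma rel_int_cone_nonzero:
  assumes sys: "is_system A" and n1: "sdim A \<ge> 1" and a: "a \<in> rel_int (sdim A) (scone A)"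
  shows "a \<noteq> (\<lambda>_. 0)"
proof
  assume a0: "a = (\<lambda>_. 0)"
  define n where "n = sdim A"
  note F = is_systemD[OF sys, folded n_def]
  define z where "z = (\<lambda>i::nat. if i = 0 then (1::real) else 0)"
  have zV: "z \<in> V n" "(\<lambda>i. - z i) \<in> V n" using n1 by (auto simp: z_def V_def n_def)
  obtain d where d: "d > 0" "(\<lambda>i. a i - d * z i) \<in> scone A"
    using rel_int_perturb[OF a[folded n_def] F(1) zV(1)] by blast
  obtain d' where d': "d' > 0" "(\<lambda>i. a i - d' * - z i) \<in> scone A"
    using rel_int_perturb[OF a[folded n_def] F(1) zV(2)] by blast
  define w where "w = (\<lambda>i. d * z i)"
  have neg: "(\<lambda>i. - w i) \<in> scone A" using d(2) by (simp add: a0 w_def)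
  have "(\<lambda>i. d' * z i) \<in> scone A" using d'(2) by (simp add: a0)
  then have "(\<lambda>i. (d / d') * (d' * z i)) \<in> scone A"
    by (rule F(4)[rotated]) (use d(1) d'(1) in simp)
  moreover have "(\<lambda>i. (d / d') * (d' * z i)) = w" using d'(1) by (simp add: w_def)
  ultimately have "w \<in> scone A" by simp
  then have "w = (\<lambda>_. 0)" using F(6) neg by blast
  then have "w 0 = 0" by simp
  then show False using d(1) by (simp add: w_def z_def)
qed

lemma pair_unit_rel_int_pos:
  assumes sys: "is_system A" and n1: "sdim A \<ge> 1" and a: "a \<in> rel_int (sdim A) (scone A)"
  shows "pair (sdim A) (sunit A) a > 0"
proof -
  define n where "n = sdim A"
  note F = is_systemD[OF sys, folded n_def]
  have aK: "a \<in> scone A" and aV: "a \<in> V n" using a rel_int_subset F(1) by auto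
  have aa: "pair n a a > 0" using pair_self_pos[OF aV rel_int_cone_nonzero[OF sys n1 a]] .
  obtain d where d: "d > 0" "(\<lambda>i. sunit A i - d * a i) \<in> dual_cone A"
    using rel_int_perturb[OF F(8) dual_cone_subset_V[of A, folded n_def] aV] by blast
  then have "0 \<le> pair n (\<lambda>i. sunit A i - d * a i) a"
    using aK unfolding dual_cone_def n_def by auto
  then have "d * pair n a a \<le> pair n (sunit A) a" by (simp add: pair_diff_left pair_scale_left)
  moreover have "d * pair n a a > 0" using d aa by simp
  ultimately show ?thesis unfolding n_def by linarith
qed

lemma normalized_rel_int_state:
  assumes sys: "is_system A" and n1: "sdim A \<ge> 1" and a: "a \<in> rel_int (sdim A) (scone A)"
  defines "s \<equiv> pair (sdim A) (sunit A) a"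
  shows "s > 0" and "(\<lambda>i. (1 / s) * a i) \<in> rel_int (sdim A) (scone A)"
    and "pair (sdim A) (sunit A) (\<lambda>i. (1 / s) * a i) = 1"
proof -
  show s: "s > 0" unfolding s_def by (rule pair_unit_rel_int_pos[OF sys n1 a])
  show "(\<lambda>i. (1 / s) * a i) \<in> rel_int (sdim A) (scone A)" using rel_int_cone_scale[OF sys _ a, of "1 / s"] s by simp
  show "pair (sdim A) (sunit A) (\<lambda>i. (1 / s) * a i) = 1"
    unfolding pair_scale using s by (simp add: s_def)
qed

lemma cone_contains_cube:
  assumes sys: "is_system A"
    and pq: "\<And>k. k < sdim A \<Longrightarrow> p k \<in> scone A \<and> q k \<in> scone A"
    and unit: "\<And>k i. k < sdim A \<Longrightarrow> p k i - q k i = (if i = k then 1 else 0)"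
    and x: "x \<in> V (sdim A)" "\<And>k. k < sdim A \<Longrightarrow> \<bar>x k\<bar> \<le> 1"
  shows "(\<lambda>t. (\<Sum>k<sdim A. p k t + q k t) + x t) \<in> scone A"
proof -
  define n where "n = sdim A"
  note F = is_systemD[OF sys, folded n_def]
  have "(\<lambda>t. (1 + x k) * p k t + (1 - x k) * q k t) \<in> scone A" if k: "k < n" for k
  proof -
    have "0 \<le> 1 + x k" "0 \<le> 1 - x k" using x(2)[of k] k by (simp_all add: abs_le_iff n_def)
    then show ?thesis using F(3) F(4) pq[of k] k n_def by simp
  qed
  then have sum_in: "(\<lambda>t. \<Sum>k<n. (1 + x k) * p k t + (1 - x k) * q k t) \<in> scone A"
    using cone_sum[OF sys finite_lessThan] by simp
  have "(\<Sum>k<n. (1 + x k) * p k t + (1 - x k) * q k t) = (\<Sum>k<n. p k t + q k t) + x t" for t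
  proof -
    have "(\<Sum>k<n. (1 + x k) * p k t + (1 - x k) * q k t)
          = (\<Sum>k<n. p k t + q k t) + (\<Sum>k<n. x k * (p k t - q k t))"
      by (simp add: sum.distrib[symmetric] algebra_simps)
    also have "(\<Sum>k<n. x k * (p k t - q k t)) = (\<Sum>k<n. if k = t then x t else 0)"
      using unit n_def by (intro sum.cong) auto
    also have "\<dots> = x t" using x(1) n_def by (simp add: V_def)
    finally show ?thesis .
  qed
  then show ?thesis using sum_in n_def by simp
qed

lemma rel_int_cone_nonempty:
  assumes sys: "is_system A"
  shows "\<exists>c. c \<in> rel_int (sdim A) (scone A)"
proof -
  define n where "n = sdim A"
  note F = is_systemD[OF sys, folded n_def]
  have "(\<lambda>i. if i = k then 1 else 0) \<in> V n" if "k < n" for k :: nat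
    using that by (auto simp: V_def)
  then have "\<forall>k. \<exists>a b. k < n \<longrightarrow> a \<in> scone A \<and> b \<in> scone A \<and>
                (\<lambda>i. if i = k then 1 else 0) = (\<lambda>i. a i - b i)"
    using F(7) by meson
  then obtain p q where pq: "\<And>k. k < n \<Longrightarrow> p k \<in> scone A \<and> q k \<in> scone A"
      and unit: "\<And>k i. k < n \<Longrightarrow> p k i - q k i = (if i = k then 1 else 0)"
    by metis
  define c where "c = (\<lambda>t. \<Sum>k<n. p k t + q k t)"
  note cube = cone_contains_cube[OF sys, folded n_def, OF pq unit]
  have cK: "c \<in> scone A" using cube[of "\<lambda>_. 0"] V_zero by (simp add: c_def)
  then have cV: "c \<in> V n" using F(1) by blast
  have "y \<in> scone A" if y: "y \<in> V n" "sqdist n c y < 1\<^sup>2" for y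
  proof -
    have "\<bar>y k - c k\<bar> \<le> 1" if "k < n" for k
    proof -
      have "(y k - c k)\<^sup>2 \<le> 1" using sqdist_le_coord[OF that, of c y] y(2) by (simp add: power2_commute)
      then show ?thesis using abs_le_square_iff[of "y k - c k" 1] by simp
    qed
    then have "(\<lambda>t. c t + (y t - c t)) \<in> scone A"
      using cube[of "\<lambda>t. y t - c t"] V_diff[OF y(1) cV] by (simp add: c_def)
    then show ?thesis by simp
  qed
  then have "c \<in> rel_int n (scone A)" using cK unfolding rel_int_def by (intro CollectI conjI exI[of _ 1]) auto
  then show ?thesis unfolding n_def by blast
qed

section \<open>Finite-dimensional linear algebra\<close>

lemma left_inverse_if_right_inverse:
  fixes M B :: "nat \<Rightarrow> nat \<Rightarrow> real"
  assumes "\<And>j k. j < n \<Longrightarrow> k < n \<Longrightarrow> (\<Sum>i<n. M j i * B i k) = (if j = k then 1 else 0)"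
  shows "\<And>i l. i < n \<Longrightarrow> l < n \<Longrightarrow> (\<Sum>j<n. B i j * M j l) = (if i = l then 1 else 0)"
proof -
  define MA where "MA = mat n n (\<lambda>(j, i). M j i)"
  define BA where "BA = mat n n (\<lambda>(i, k). B i k)"
  have "MA * BA = 1\<^sub>m n"
  proof (rule eq_matI)
    fix j k assume "j < dim_row (1\<^sub>m n :: real mat)" "k < dim_col (1\<^sub>m n :: real mat)"
    then have "j < n" "k < n" by auto
    then show "(MA * BA) $$ (j, k) = 1\<^sub>m n $$ (j, k)"
      using assms[of j k] by (simp add: MA_def BA_def scalar_prod_def lessThan_atLeast0)
  qed (simp_all add: MA_def BA_def)
  moreover have "MA \<in> carrier_mat n n" "BA \<in> carrier_mat n n" by (simp_all add: MA_def BA_def)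
  ultimately have BM: "BA * MA = 1\<^sub>m n" using mat_mult_left_right_inverse by blast
  fix i l assume il: "i < n" "l < n"
  have "(BA * MA) $$ (i, l) = (\<Sum>j<n. B i j * M j l)"
    using il by (simp add: MA_def BA_def scalar_prod_def lessThan_atLeast0)
  then show "(\<Sum>j<n. B i j * M j l) = (if i = l then 1 else 0)" using BM il by simp
qed

lemma kernel_trivial_if_right_inverse:
  fixes M B :: "nat \<Rightarrow> nat \<Rightarrow> real"
  assumes right_inv: "\<And>j k. j < n \<Longrightarrow> k < n \<Longrightarrow> (\<Sum>i<n. M j i * B i k) = (if j = k then 1 else 0)"
    and kernel: "\<And>j. j < n \<Longrightarrow> (\<Sum>l<n. M j l * g l) = 0"
    and i: "i < n"
  shows "g i = 0"
proof -
  note left_inv = left_inverse_if_right_inverse[OF right_inv i]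
  have "g i = (\<Sum>l<n. if i = l then g l else 0)" using i by simp
  also have "\<dots> = (\<Sum>l<n. (\<Sum>j<n. B i j * M j l) * g l)"
    by (intro sum.cong) (simp_all add: left_inv)
  also have "\<dots> = (\<Sum>l<n. \<Sum>j<n. B i j * M j l * g l)"
    by (simp add: sum_distrib_right)
  also have "\<dots> = (\<Sum>j<n. \<Sum>l<n. B i j * M j l * g l)"
    by (rule sum.swap)
  also have "\<dots> = (\<Sum>j<n. B i j * (\<Sum>l<n. M j l * g l))"
    by (simp add: sum_distrib_left mult.assoc)
  also have "\<dots> = 0" using kernel by simp
  finally show ?thesis .
qed

lemma inj_on_hat_if_surj:
  assumes surj: "\<forall>x\<in>V n. \<exists>f\<in>V n. hat n n \<omega> f = x"
  shows "inj_on (hat n n \<omega>) (V n)"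
proof (rule inj_onI)
  define e where "e = (\<lambda>k i::nat. if i = k \<and> k < n then (1::real) else 0)"
  have "e k \<in> V n" for k by (auto simp: e_def V_def)
  then have "\<forall>k. \<exists>f. hat n n \<omega> f = e k" using surj by blast
  then obtain b where b: "\<And>k. hat n n \<omega> (b k) = e k" by metis
  define M where "M = (\<lambda>j i. \<omega> (i * n + j))"
  have hat_M: "hat n n \<omega> f j = (\<Sum>i<n. M j i * f i)" if "j < n" for f j
    using that by (simp add: hat_def M_def)
  have right_inv: "(\<Sum>i<n. M j i * b k i) = (if j = k then 1 else 0)" if "j < n" "k < n" for j k
    using b[of k] hat_M[of j "b k"] that by (auto simp: e_def)
  fix f f' assume f: "f \<in> V n" "f' \<in> V n" and eq: "hat n n \<omega> f = hat n n \<omega> f'"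
  have "hat n n \<omega> (\<lambda>i. f i - f' i) = (\<lambda>_. 0)" unfolding hat_diff eq by simp
  then have kernel: "(\<Sum>l<n. M j l * (f l - f' l)) = 0" if "j < n" for j
    using hat_M[OF that, of "\<lambda>i. f i - f' i"] by simp
  have "f i - f' i = 0" if "i < n" for i
    by (rule kernel_trivial_if_right_inverse[of n M "\<lambda>i k. b k i" "\<lambda>l. f l - f' l" i])
      (use right_inv kernel that in auto)
  then show "f = f'" using V_eqI[OF f] by simp
qed

section \<open>Order isomorphisms A* \<rightarrow> A from steering\<close>

definition dual_order_iso :: "system \<Rightarrow> ((nat \<Rightarrow> real) \<Rightarrow> (nat \<Rightarrow> real)) \<Rightarrow> bool" where
  "dual_order_iso A h \<longleftrightarrow> lin_on (sdim A) h \<and> bij_betw h (V (sdim A)) (V (sdim A)) \<and>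
     h ` dual_cone A = scone A"

lemma weakly_self_dual_iff_dual_order_iso: "weakly_self_dual A \<longleftrightarrow> (\<exists>h. dual_order_iso A h)"
  by (simp add: weakly_self_dual_def dual_order_iso_def)

lemma hat_mem_cone_if_max_cone:
  assumes sys: "is_system A" and \<omega>: "\<omega> \<in> max_cone A A" and f: "f \<in> dual_cone A"
  shows "hat (sdim A) (sdim A) \<omega> f \<in> scone A"
  by (rule mem_cone_if_dual_nonneg[OF sys hat_in_V])
    (use \<omega> f in \<open>auto simp: max_cone_def bform_eq_pair_hat\<close>)

lemma steering_hat_onto_cone:
  assumes sys: "is_system A" and steers: "steers_marginal A A \<omega>"
    and marg: "marginalB A A \<omega> = \<alpha>" and \<alpha>: "\<alpha> \<in> rel_int (sdim A) (scone A)"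
    and \<beta>: "\<beta> \<in> scone A"
  shows "\<exists>f\<in>dual_cone A. hat (sdim A) (sdim A) \<omega> f = \<beta>"
proof -
  note F = is_systemD[OF sys]
  obtain d where d: "d > 0" "(\<lambda>i. \<alpha> i - d * \<beta> i) \<in> scone A"
    using rel_int_perturb[OF \<alpha> F(1)] \<beta> F(1) by blast
  define b where "b = (\<lambda>k::nat. if k = 0 then (\<lambda>t. d * \<beta> t) else (\<lambda>t. \<alpha> t - d * \<beta> t))"
  have "is_ensemble A (marginalB A A \<omega>) 2 b"
    unfolding is_ensemble_def marg
    using d \<beta> F(4)[of d \<beta>] by (auto simp: b_def numeral_2_eq_2 less_Suc_eq)
  then obtain x where x: "is_observable A 2 x" "\<forall>i<2. hat (sdim A) (sdim A) \<omega> (x i) = b i"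
    using steers unfolding steers_marginal_def by blast
  have "(\<lambda>i. (1 / d) * x 0 i) \<in> dual_cone A"
    using x(1) d(1) by (intro dual_cone_scale) (auto simp: is_observable_def)
  moreover have "hat (sdim A) (sdim A) \<omega> (\<lambda>i. (1 / d) * x 0 i) = \<beta>"
    unfolding hat_scale using x(2) d(1) by (simp add: b_def)
  ultimately show ?thesis by blast
qed

lemma dual_order_iso_hat_if_steers:
  assumes sys: "is_system A" and \<omega>: "\<omega> \<in> max_cone A A" and steers: "steers_marginal A A \<omega>"
    and marg: "marginalB A A \<omega> = \<alpha>" and \<alpha>: "\<alpha> \<in> rel_int (sdim A) (scone A)"
  shows "dual_order_iso A (hat (sdim A) (sdim A) \<omega>)" and "hat (sdim A) (sdim A) \<omega> (sunit A) = \<alpha>"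
proof -
  define n where "n = sdim A"
  define h where "h = hat n n \<omega>"
  have img: "h ` dual_cone A = scone A"
    using hat_mem_cone_if_max_cone[OF sys \<omega>] steering_hat_onto_cone[OF sys steers marg \<alpha>]
    by (force simp: h_def n_def)
  have surj: "\<forall>x\<in>V n. \<exists>f\<in>V n. h f = x"
  proof
    fix x assume "x \<in> V n"
    then obtain a b where ab: "a \<in> scone A" "b \<in> scone A" "x = (\<lambda>i. a i - b i)"
      using is_systemD(7)[OF sys] n_def by blast
    then have "a \<in> h ` dual_cone A" "b \<in> h ` dual_cone A" using img by simp_all
    then obtain fa fb where "fa \<in> dual_cone A" "h fa = a" "fb \<in> dual_cone A" "h fb = b"
      by blast
    moreover from this have "(\<lambda>i. fa i - fb i) \<in> V n"
      using dual_cone_subset_V n_def by (intro V_diff) auto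
    ultimately show "\<exists>f\<in>V n. h f = x"
      using ab(3) by (intro bexI[of _ "\<lambda>i. fa i - fb i"]) (auto simp: h_def hat_diff)
  qed
  then have "bij_betw h (V n) (V n)"
    using inj_on_hat_if_surj[of n \<omega>] by (auto simp: bij_betw_def h_def hat_in_V)
  then show "dual_order_iso A (hat (sdim A) (sdim A) \<omega>)"
    using img lin_on_hat by (simp add: dual_order_iso_def h_def n_def)
  show "hat (sdim A) (sdim A) \<omega> (sunit A) = \<alpha>" using marg by (simp add: marginalB_def)
qed

lemma universal_self_steering_dual_order_iso:
  assumes T: "probabilistic_theory T" "universal_self_steering T" "A \<in> T"
    and \<alpha>: "\<alpha> \<in> rel_int (sdim A) (scone A)" "pair (sdim A) (sunit A) \<alpha> = 1"
  shows "\<exists>h. dual_order_iso A h \<and> h (sunit A) = \<alpha>"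
proof -
  have sys: "is_system A" using T unfolding probabilistic_theory_def by blast
  have "is_state A \<alpha>" using \<alpha> rel_int_subset unfolding is_state_def by blast
  then obtain C \<omega> where C: "is_composite A A C" "is_state C \<omega>" "marginalB A A \<omega> = \<alpha>"
      "steers_marginal A A \<omega>"
    using T unfolding universal_self_steering_def by blast
  have "\<omega> \<in> max_cone A A" using C(1,2) unfolding is_composite_def is_state_def by blast
  then show ?thesis using dual_order_iso_hat_if_steers[OF sys _ C(4,3) \<alpha>(1)] by blast
qed

section \<open>Order automorphisms\<close>

lemma lin_on_inv_into:
  assumes lin: "lin_on n h" and bij: "bij_betw h (V n) (V n)"
  shows "lin_on n (inv_into (V n) h)"
proof -
  let ?g = "inv_into (V n) h"
  have inj: "inj_on h (V n)" and im: "h ` V n = V n" using bij by (auto simp: bij_betw_def)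
  have gV: "?g x \<in> V n" if "x \<in> V n" for x using that im inv_into_into[of x h "V n"] by simp
  have hg: "h (?g x) = x" if "x \<in> V n" for x using that im f_inv_into_f[of x h "V n"] by simp
  show ?thesis unfolding lin_on_def
  proof (intro conjI ballI allI)
    fix x y assume xy: "x \<in> V n" "y \<in> V n"
    have "h (\<lambda>i. ?g x i + ?g y i) = (\<lambda>i. x i + y i)"
      using lin gV hg xy unfolding lin_on_def by simp
    then show "?g (\<lambda>i. x i + y i) = (\<lambda>i. ?g x i + ?g y i)"
      using inv_into_f_f[OF inj V_add[OF gV gV]] xy by metis
  next
    fix c x assume x: "x \<in> V n"
    have "h (\<lambda>i. c * ?g x i) = (\<lambda>i. c * x i)"
      using lin gV hg x unfolding lin_on_def by simp
    then show "?g (\<lambda>i. c * x i) = (\<lambda>i. c * ?g x i)"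
      using inv_into_f_f[OF inj V_scale[OF gV]] x by metis
  qed
qed

lemma lin_on_comp:
  assumes "lin_on n f" "lin_on n h" "\<forall>x\<in>V n. f x \<in> V n"
  shows "lin_on n (\<lambda>x. h (f x))"
  using assms unfolding lin_on_def by (simp add: V_add V_scale)

lemma lin_on_scale: "lin_on n (\<lambda>x i. c * x i)"
  unfolding lin_on_def by (simp add: algebra_simps)

lemma bij_betw_scale: "c \<noteq> 0 \<Longrightarrow> bij_betw (\<lambda>x i. c * x i) (V n) (V n)"
  by (rule bij_betw_byWitness[where f'="\<lambda>x i. x i / c"]) (auto simp: V_def)

lemma order_automorphism_via_dual_order_isos:
  assumes sys: "is_system A" and ha: "dual_order_iso A ha" and hb: "dual_order_iso A hb"
    and c: "c > 0"
  defines "g \<equiv> \<lambda>x i. c * hb (inv_into (V (sdim A)) ha x) i"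
  shows "order_automorphism A g"
    and "\<And>s. s \<noteq> 0 \<Longrightarrow> ha (sunit A) = (\<lambda>i. (1 / s) * a i) \<Longrightarrow>
           g a = (\<lambda>i. c * s * hb (sunit A) i)"
proof -
  define n where "n = sdim A"
  define gi where "gi = inv_into (V n) ha"
  have lin: "lin_on n ha" "lin_on n hb" and bij: "bij_betw ha (V n) (V n)" "bij_betw hb (V n) (V n)"
    and img: "ha ` dual_cone A = scone A" "hb ` dual_cone A = scone A"
    using ha hb by (auto simp: dual_order_iso_def n_def)
  have gi_bij: "bij_betw gi (V n) (V n)" using bij_betw_inv_into[OF bij(1)] by (simp add: gi_def)
  then have giV: "\<forall>x\<in>V n. gi x \<in> V n" by (auto simp: bij_betw_def)
  have hbV: "\<forall>x\<in>V n. hb x \<in> V n" using bij(2) by (auto simp: bij_betw_def)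
  have "gi ` scone A = dual_cone A"
    using inv_into_image_cancel[OF bij_betw_imp_inj_on[OF bij(1)] dual_cone_subset_V[of A, folded n_def]]
      img(1) by (simp add: gi_def)
  moreover have "g ` scone A = (\<lambda>x i. c * x i) ` hb ` gi ` scone A"
    by (simp add: image_image g_def gi_def n_def)
  ultimately have "g ` scone A = scone A" using img(2) cone_scale_image[OF sys c] by simp
  moreover have "lin_on n g"
    using lin_on_comp[OF lin_on_comp[OF lin_on_inv_into[OF lin(1) bij(1)] lin(2)] lin_on_scale] giV hbV
    by (simp add: g_def gi_def n_def)
  moreover have "bij_betw g (V n) (V n)"
    using bij_betw_trans[OF bij_betw_trans[OF gi_bij bij(2)] bij_betw_scale[of c n]] c
    by (simp add: g_def gi_def n_def comp_def)
  ultimately show "order_automorphism A g" by (simp add: order_automorphism_def n_def)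
  fix s assume s: "s \<noteq> 0" and ha_unit: "ha (sunit A) = (\<lambda>i. (1 / s) * a i)"
  have uV: "sunit A \<in> V n"
    using is_systemD(8)[OF sys] rel_int_subset dual_cone_subset_V n_def by blast
  have "ha (\<lambda>i. s * sunit A i) = a"
    using lin(1) uV ha_unit s by (simp add: lin_on_def)
  then have "gi a = (\<lambda>i. s * sunit A i)"
    using inv_into_f_f[OF bij_betw_imp_inj_on[OF bij(1)] V_scale[OF uV, where c=s]] by (simp add: gi_def)
  then show "g a = (\<lambda>i. c * s * hb (sunit A) i)"
    using lin(2) uV by (simp add: g_def gi_def n_def lin_on_def mult.assoc)
qed

lemma homogeneous_if_dual_order_isos:
  assumes sys: "is_system A" and n1: "sdim A \<ge> 1"
    and iso: "\<And>\<alpha>. \<alpha> \<in> rel_int (sdim A) (scone A) \<Longrightarrow> pair (sdim A) (sunit A) \<alpha> = 1 \<Longrightarrow>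
                 \<exists>h. dual_order_iso A h \<and> h (sunit A) = \<alpha>"
  shows "homogeneous A"
  unfolding homogeneous_def
proof (intro ballI)
  fix a b assume a: "a \<in> rel_int (sdim A) (scone A)" and b: "b \<in> rel_int (sdim A) (scone A)"
  define sa where "sa = pair (sdim A) (sunit A) a"
  define sb where "sb = pair (sdim A) (sunit A) b"
  note na = normalized_rel_int_state[OF sys n1 a, folded sa_def]
  note nb = normalized_rel_int_state[OF sys n1 b, folded sb_def]
  obtain ha where ha: "dual_order_iso A ha" "ha (sunit A) = (\<lambda>i. (1 / sa) * a i)"
    using iso[OF na(2,3)] by blast
  obtain hb where hb: "dual_order_iso A hb" "hb (sunit A) = (\<lambda>i. (1 / sb) * b i)"
    using iso[OF nb(2,3)] by blast
  have "sb / sa > 0" using na(1) nb(1) by simp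
  note aut = order_automorphism_via_dual_order_isos[OF sys ha(1) hb(1) this]
  have "(\<lambda>x i. sb / sa * hb (inv_into (V (sdim A)) ha x) i) a = b"
    using aut(2)[of sa a] ha(2) hb(2) na(1) nb(1) by simp
  then show "\<exists>g. order_automorphism A g \<and> g a = b" using aut(1) by blast
qed

lemma homogeneous_weakly_self_dual_if_dim_0:
  assumes sys: "is_system A" and n0: "sdim A = 0"
  shows "homogeneous A \<and> weakly_self_dual A"
proof -
  have K: "scone A = V 0" using is_systemD(1,2)[OF sys] n0 V_0 by auto
  have "(\<lambda>_. 0) \<in> dual_cone A" by (simp add: dual_cone_def pair_def V_zero)
  then have D: "dual_cone A = V 0" using dual_cone_subset_V[of A] n0 V_0 by auto
  have "order_automorphism A id"
    unfolding order_automorphism_def lin_on_def by (simp add: bij_betw_id)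
  then have "homogeneous A"
    unfolding homogeneous_def using rel_int_subset K V_0 n0 by (metis id_apply singletonD subsetD)
  moreover have "dual_order_iso A id"
    using K D n0 by (simp add: dual_order_iso_def lin_on_def bij_betw_id)
  ultimately show ?thesis using weakly_self_dual_iff_dual_order_iso by blast
qed

theorem proposition5p8:
  assumes "probabilistic_theory T"
    and "universal_self_steering T"
    and "A \<in> T"
    and "irreducible A"
  shows "homogeneous A \<and> weakly_self_dual A"
proof -
  have sys: "is_system A" using assms(1,3) unfolding probabilistic_theory_def by blast
  note iso = universal_self_steering_dual_order_iso[OF assms(1-3)]
  show ?thesis
  proof (cases "sdim A = 0")
    case True
    then show ?thesis by (rule homogeneous_weakly_self_dual_if_dim_0[OF sys])
  next
    case False
    then have n1: "sdim A \<ge> 1" by simp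
    obtain c where "c \<in> rel_int (sdim A) (scone A)" using rel_int_cone_nonempty[OF sys] by blast
    then have "weakly_self_dual A"
      using iso normalized_rel_int_state[OF sys n1] weakly_self_dual_iff_dual_order_iso by blast
    moreover have "homogeneous A" using homogeneous_if_dual_order_isos[OF sys n1] iso by blast
    ultimately show ?thesis by blast
  qed
qed
end
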